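(* Let $(X,S,\beta)$ be a virtual pair, $H$ a group, and let $(f,g)$ be a noncommutative 2-cocycle pair $X\times X\to H$. If $(\tilde f,g)$ is cohomologous to $(f,g)$, then $(\tilde f,g)$ is also a noncommutative 2-cocycle pair.
   Context: For a bijection $\sigma\colon X\times X\to X\times X$ write $\sigma(x,y)=(\sigma^1(x,y),\sigma^2(x,y))$. A biquandle is a bijection $\sigma$ satisfying $(\mathrm{id}\times\sigma)(\sigma\times\mathrm{id})(\mathrm{id}\times\sigma)=(\sigma\times\mathrm{id})(\mathrm{id}\times\sigma)(\sigma\times\mathrm{id})$, such that for all $x,z$ there is a unique $y$ with $\sigma^1(x,y)=z$, for all $y,t$ there is a unique $x$ with $\sigma^2(x,y)=t$, and there is a bijection $s_\sigma$ with $\{(x,y):\sigma(x,y)=(x,y)\}=\{(x,s_\sigma(x))\}$. A virtual pair $(X,S,\beta)$: biquandles $(X,S),(X,\beta)$ with $\beta^2=\mathrm{id}$ and $(\mathrm{id}\times\beta)(S\times\mathrm{id})(\mathrm{id}\times\beta)=(\beta\times\mathrm{id})(\mathrm{id}\times S)(\beta\times\mathrm{id})$; write $s=s_S$ (also $s_S$) and $s_\beta$. A noncommutative 2-cocycle pair is a pair $f,g\colon X\times X\to H$ such that for all $x,y,z\in X$: (f1) $f(x,y)f(S^2(x,y),z)=f(x,S^1(y,z))f(S^2(x,S^1(y,z)),S^2(y,z))$; (f2) $f(S^1(x,y),S^1(S^2(x,y),z))=f(y,z)$; (f3) $f(x,s(x))=1$; (g1) $g(x,s_\beta(x))=1$;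 (g2) $g(x,y)g(\beta(x,y))=1$; (g3) $g(x,y)g(\beta^2(x,y),z)=g(x,\beta^1(y,z))g(\beta^2(x,\beta^1(y,z)),\beta^2(y,z))$; (g4) $g(y,z)g(\beta^2(x,\beta^1(y,z)),\beta^2(y,z))=g(x,y)g(\beta^1(x,y),\beta^1(\beta^2(x,y),z))$; (g5) $g(y,z)g(x,\beta^1(y,z))=g(\beta^2(x,y),z)g(\beta^1(x,y),\beta^1(\beta^2(x,y),z))$; (m1) $g(y,z)=g(S^1(x,y),\beta^1(S^2(x,y),z))$; (m2) $g(y,z)g(x,\beta^1(y,z))=g(S^2(x,y),z)g(S^1(x,y),\beta^1(S^2(x,y),z))$; (m3) $g(x,\beta^1(y,z))f(\beta^2(x,\beta^1(y,z)),\beta^2(y,z))=f(x,y)g(S^2(x,y),z)$. Two pairs $(f,g)$ and $(\tilde f,\tilde g)$ of maps $X\times X\to H$ are cohomologous if $g=\tilde g$ and there is a map $\lambda\colon X\to H$ with $\tilde f(x,y)=\lambda(x)f(x,y)\lambda(S^2(x,y))^{-1}$ for all $x,y$, where $\lambda$ satisfies, for all $x,y\in X$: $\lambda(x)=\lambda(s_S(x))$, $\lambda(y)=\lambda(S^1(x,y))$, $\lambda(y)=\lambda(\beta^1(x,y))$, and $\lambda(x)$ commutes with $g(x,y)$. *)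

theory Defs
  imports "HOL-Algebra.Group"
begin

definition s1 :: "('a \<times> 'a \<Rightarrow> 'a \<times> 'a) \<Rightarrow> 'a \<Rightarrow> 'a \<Rightarrow> 'a" where
  "s1 \<sigma> x y = fst (\<sigma> (x, y))"
definition s2 :: "('a \<times> 'a \<Rightarrow> 'a \<times> 'a) \<Rightarrow> 'a \<Rightarrow> 'a \<Rightarrow> 'a" where
  "s2 \<sigma> x y = snd (\<sigma> (x, y))"

definition left_op :: "('a \<times> 'a \<Rightarrow> 'a \<times> 'a) \<Rightarrow> 'a \<times> 'a \<times> 'a \<Rightarrow> 'a \<times> 'a \<times> 'a" where
  "left_op \<sigma> t = (case t of (x, y, z) \<Rightarrow> (fst (\<sigma> (x, y)), snd (\<sigma> (x, y)), z))"
definition right_op :: "('a \<times> 'a \<Rightarrow> 'a \<times> 'a) \<Rightarrow> 'a \<times> 'a \<times> 'a \<Rightarrow> 'a \<times> 'a \<times> 'a" where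
  "right_op \<sigma> t = (case t of (x, y, z) \<Rightarrow> (x, fst (\<sigma> (y, z)), snd (\<sigma> (y, z))))"

definition biquandle :: "'a set \<Rightarrow> ('a \<times> 'a \<Rightarrow> 'a \<times> 'a) \<Rightarrow> bool" where
  "biquandle X \<sigma> \<longleftrightarrow>
     bij_betw \<sigma> (X \<times> X) (X \<times> X) \<and>
     (\<forall>t \<in> X \<times> X \<times> X.
        right_op \<sigma> (left_op \<sigma> (right_op \<sigma> t)) = left_op \<sigma> (right_op \<sigma> (left_op \<sigma> t))) \<and>
     (\<forall>x\<in>X. \<forall>z\<in>X. \<exists>!y. y \<in> X \<and> s1 \<sigma> x y = z) \<and>
     (\<forall>y\<in>X. \<forall>t\<in>X. \<exists>!x. x \<in> X \<and> s2 \<sigma> x y = t) \<and>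
     (\<exists>s. bij_betw s X X \<and>
          {p \<in> X \<times> X. \<sigma> p = p} = {(x, s x) | x. x \<in> X})"

(* The map s_sigma: s_sigma(x) is the unique y with sigma(x,y) = (x,y)
   (well defined for a biquandle). *)
definition sfun :: "'a set \<Rightarrow> ('a \<times> 'a \<Rightarrow> 'a \<times> 'a) \<Rightarrow> 'a \<Rightarrow> 'a" where
  "sfun X \<sigma> x = (THE y. y \<in> X \<and> \<sigma> (x, y) = (x, y))"

definition virtual_pair :: "'a set \<Rightarrow> ('a \<times> 'a \<Rightarrow> 'a \<times> 'a) \<Rightarrow> ('a \<times> 'a \<Rightarrow> 'a \<times> 'a) \<Rightarrow> bool" where
  "virtual_pair X S \<beta> \<longleftrightarrow>
     biquandle X S \<and> biquandle X \<beta> \<and>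
     (\<forall>p \<in> X \<times> X. \<beta> (\<beta> p) = p) \<and>
     (\<forall>t \<in> X \<times> X \<times> X.
        right_op \<beta> (left_op S (right_op \<beta> t)) = left_op \<beta> (right_op S (left_op \<beta> t)))"

definition nc_cocycle_pair ::
  "('b, 'c) monoid_scheme \<Rightarrow> 'a set \<Rightarrow> ('a \<times> 'a \<Rightarrow> 'a \<times> 'a) \<Rightarrow> ('a \<times> 'a \<Rightarrow> 'a \<times> 'a)
   \<Rightarrow> ('a \<Rightarrow> 'a \<Rightarrow> 'b) \<Rightarrow> ('a \<Rightarrow> 'a \<Rightarrow> 'b) \<Rightarrow> bool" where
  "nc_cocycle_pair H X S \<beta> f g \<longleftrightarrow>
     (\<forall>x\<in>X. \<forall>y\<in>X. f x y \<in> carrier H \<and> g x y \<in> carrier H) \<and>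
     (\<forall>x\<in>X. \<forall>y\<in>X. \<forall>z\<in>X.
        f x y \<otimes>\<^bsub>H\<^esub> f (s2 S x y) z
          = f x (s1 S y z) \<otimes>\<^bsub>H\<^esub> f (s2 S x (s1 S y z)) (s2 S y z)) \<and>
     (\<forall>x\<in>X. \<forall>y\<in>X. \<forall>z\<in>X. f (s1 S x y) (s1 S (s2 S x y) z) = f y z) \<and>
     (\<forall>x\<in>X. f x (sfun X S x) = \<one>\<^bsub>H\<^esub>) \<and>
     (\<forall>x\<in>X. g x (sfun X \<beta> x) = \<one>\<^bsub>H\<^esub>) \<and>
     (\<forall>x\<in>X. \<forall>y\<in>X. g x y \<otimes>\<^bsub>H\<^esub> g (s1 \<beta> x y) (s2 \<beta> x y) = \<one>\<^bsub>H\<^esub>) \<and>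
     (\<forall>x\<in>X. \<forall>y\<in>X. \<forall>z\<in>X.
        g x y \<otimes>\<^bsub>H\<^esub> g (s2 \<beta> x y) z
          = g x (s1 \<beta> y z) \<otimes>\<^bsub>H\<^esub> g (s2 \<beta> x (s1 \<beta> y z)) (s2 \<beta> y z)) \<and>
     (\<forall>x\<in>X. \<forall>y\<in>X. \<forall>z\<in>X.
        g y z \<otimes>\<^bsub>H\<^esub> g (s2 \<beta> x (s1 \<beta> y z)) (s2 \<beta> y z)
          = g x y \<otimes>\<^bsub>H\<^esub> g (s1 \<beta> x y) (s1 \<beta> (s2 \<beta> x y) z)) \<and>
     (\<forall>x\<in>X. \<forall>y\<in>X. \<forall>z\<in>X.
        g y z \<otimes>\<^bsub>H\<^esub> g x (s1 \<beta> y z)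
          = g (s2 \<beta> x y) z \<otimes>\<^bsub>H\<^esub> g (s1 \<beta> x y) (s1 \<beta> (s2 \<beta> x y) z)) \<and>
     (\<forall>x\<in>X. \<forall>y\<in>X. \<forall>z\<in>X. g y z = g (s1 S x y) (s1 \<beta> (s2 S x y) z)) \<and>
     (\<forall>x\<in>X. \<forall>y\<in>X. \<forall>z\<in>X.
        g y z \<otimes>\<^bsub>H\<^esub> g x (s1 \<beta> y z)
          = g (s2 S x y) z \<otimes>\<^bsub>H\<^esub> g (s1 S x y) (s1 \<beta> (s2 S x y) z)) \<and>
     (\<forall>x\<in>X. \<forall>y\<in>X. \<forall>z\<in>X.
        g x (s1 \<beta> y z) \<otimes>\<^bsub>H\<^esub> f (s2 \<beta> x (s1 \<beta> y z)) (s2 \<beta> y z)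
          = f x y \<otimes>\<^bsub>H\<^esub> g (s2 S x y) z)"

definition cohomologous ::
  "('b, 'c) monoid_scheme \<Rightarrow> 'a set \<Rightarrow> ('a \<times> 'a \<Rightarrow> 'a \<times> 'a) \<Rightarrow> ('a \<times> 'a \<Rightarrow> 'a \<times> 'a)
   \<Rightarrow> ('a \<Rightarrow> 'a \<Rightarrow> 'b) \<Rightarrow> ('a \<Rightarrow> 'a \<Rightarrow> 'b) \<Rightarrow> ('a \<Rightarrow> 'a \<Rightarrow> 'b) \<Rightarrow> ('a \<Rightarrow> 'a \<Rightarrow> 'b) \<Rightarrow> bool" where
  "cohomologous H X S \<beta> f g f' g' \<longleftrightarrow>
     (\<forall>x\<in>X. \<forall>y\<in>X. g' x y = g x y) \<and>
     (\<exists>lam. (\<forall>x\<in>X. lam x \<in> carrier H) \<and>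
          (\<forall>x\<in>X. \<forall>y\<in>X.
             f' x y = lam x \<otimes>\<^bsub>H\<^esub> f x y \<otimes>\<^bsub>H\<^esub> inv\<^bsub>H\<^esub> (lam (s2 S x y))) \<and>
          (\<forall>x\<in>X. lam x = lam (sfun X S x)) \<and>
          (\<forall>x\<in>X. \<forall>y\<in>X. lam y = lam (s1 S x y)) \<and>
          (\<forall>x\<in>X. \<forall>y\<in>X. lam y = lam (s1 \<beta> x y)) \<and>
          (\<forall>x\<in>X. \<forall>y\<in>X. lam x \<otimes>\<^bsub>H\<^esub> g x y = g x y \<otimes>\<^bsub>H\<^esub> lam x))"

end

theory Submission
  imports Defs
begin

text \<open>Since \<open>f' x y = lam x \<cdot> f x y \<cdot> lam (S\<^sup>2(x, y))\<inverse>\<close>, the inner factors of \<open>lam\<close> cancel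
  in the products occurring in (f1) and (m3), so every identity involving \<open>f\<close> transfers to \<open>f'\<close>
  once the outer factors of \<open>lam\<close> on both sides agree. That agreement comes from the invariance
  of \<open>lam\<close> under \<open>S\<^sup>1\<close>, \<open>\<beta>\<^sup>1\<close> and \<open>s\<^sub>S\<close>, combined with the braid relation of \<open>S\<close> and the
  mixed braid relation of the virtual pair; as \<open>\<beta>\<close> is an involution, invariance under \<open>\<beta>\<^sup>1\<close>
  gives invariance under \<open>\<beta>\<^sup>2\<close>. In (m3) the value of \<open>g\<close> must be moved past \<open>lam\<close>, which is
  where the commutation hypothesis enters.\<close>

lemma (in group) inv_commute:
  assumes "m \<in> carrier G" "x \<in> carrier G" "m \<otimes> x = x \<otimes> m"
  shows "inv m \<otimes> x = x \<otimes> inv m"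
proof -
  have "inv m \<otimes> x = inv m \<otimes> (x \<otimes> m) \<otimes> inv m" using assms(1,2) by (simp add: m_assoc)
  also have "\<dots> = inv m \<otimes> (m \<otimes> x) \<otimes> inv m" using assms(3) by simp
  also have "\<dots> = x \<otimes> inv m" using assms(1,2) by (simp add: m_assoc[symmetric])
  finally show ?thesis .
qed

lemma (in group) conj_mult_conj:
  assumes "a \<in> carrier G" "b \<in> carrier G" "c \<in> carrier G" "d \<in> carrier G" "e \<in> carrier G"
  shows "(a \<otimes> b \<otimes> inv c) \<otimes> (c \<otimes> d \<otimes> inv e) = a \<otimes> (b \<otimes> d) \<otimes> inv e"
proof -
  have cancel: "inv c \<otimes> (c \<otimes> (d \<otimes> inv e)) = d \<otimes> inv e"
    using assms by (simp add: m_assoc[symmetric])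
  have "(a \<otimes> b \<otimes> inv c) \<otimes> (c \<otimes> d \<otimes> inv e) = a \<otimes> b \<otimes> (inv c \<otimes> (c \<otimes> (d \<otimes> inv e)))"
    using assms by (simp add: m_assoc)
  also have "\<dots> = a \<otimes> (b \<otimes> d) \<otimes> inv e" using assms by (simp add: cancel m_assoc)
  finally show ?thesis .
qed

lemma biquandle_closed:
  assumes "biquandle X \<sigma>" "x \<in> X" "y \<in> X"
  shows "s1 \<sigma> x y \<in> X" "s2 \<sigma> x y \<in> X"
proof -
  have "bij_betw \<sigma> (X \<times> X) (X \<times> X)" using assms(1) unfolding biquandle_def by (elim conjE)
  then have "\<sigma> (x, y) \<in> X \<times> X" using assms(2,3) bij_betwE by blast
  then show "s1 \<sigma> x y \<in> X" "s2 \<sigma> x y \<in> X" unfolding s1_def s2_def by auto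
qed

lemma left_op_apply: "left_op \<sigma> (x, y, z) = (s1 \<sigma> x y, s2 \<sigma> x y, z)"
  unfolding left_op_def s1_def s2_def by simp

lemma right_op_apply: "right_op \<sigma> (x, y, z) = (x, s1 \<sigma> y z, s2 \<sigma> y z)"
  unfolding right_op_def s1_def s2_def by simp

lemma biquandle_braid:
  assumes "biquandle X \<sigma>" "x \<in> X" "y \<in> X" "z \<in> X"
  shows biquandle_braid_s2: "s2 \<sigma> (s2 \<sigma> x (s1 \<sigma> y z)) (s2 \<sigma> y z) = s2 \<sigma> (s2 \<sigma> x y) z"
    and biquandle_braid_s1:
      "s1 \<sigma> (s2 \<sigma> x (s1 \<sigma> y z)) (s2 \<sigma> y z) = s2 \<sigma> (s1 \<sigma> x y) (s1 \<sigma> (s2 \<sigma> x y) z)"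
proof -
  have "\<forall>t \<in> X \<times> X \<times> X.
      right_op \<sigma> (left_op \<sigma> (right_op \<sigma> t)) = left_op \<sigma> (right_op \<sigma> (left_op \<sigma> t))"
    using assms(1) unfolding biquandle_def by (elim conjE)
  then have "right_op \<sigma> (left_op \<sigma> (right_op \<sigma> (x, y, z)))
      = left_op \<sigma> (right_op \<sigma> (left_op \<sigma> (x, y, z)))"
    using assms(2-4) by simp
  then show "s2 \<sigma> (s2 \<sigma> x (s1 \<sigma> y z)) (s2 \<sigma> y z) = s2 \<sigma> (s2 \<sigma> x y) z"
    and "s1 \<sigma> (s2 \<sigma> x (s1 \<sigma> y z)) (s2 \<sigma> y z) = s2 \<sigma> (s1 \<sigma> x y) (s1 \<sigma> (s2 \<sigma> x y) z)"
    by (simp_all add: left_op_apply right_op_apply)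
qed

lemma virtual_pair_braid_s2:
  assumes "virtual_pair X S \<beta>" "x \<in> X" "y \<in> X" "z \<in> X"
  shows "s2 \<beta> (s2 S x (s1 \<beta> y z)) (s2 \<beta> y z) = s2 S (s2 \<beta> x y) z"
proof -
  have "right_op \<beta> (left_op S (right_op \<beta> (x, y, z)))
      = left_op \<beta> (right_op S (left_op \<beta> (x, y, z)))"
    using assms unfolding virtual_pair_def by (elim conjE) simp
  then show ?thesis by (simp add: left_op_apply right_op_apply)
qed

lemma involution_s1_s2:
  assumes "\<sigma> (\<sigma> (x, y)) = (x, y)"
  shows "s1 \<sigma> (s1 \<sigma> x y) (s2 \<sigma> x y) = x" "s2 \<sigma> (s1 \<sigma> x y) (s2 \<sigma> x y) = y"
  using assms unfolding s1_def s2_def by simp_all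

lemma biquandle_sfun:
  assumes "biquandle X \<sigma>" "x \<in> X"
  shows "sfun X \<sigma> x \<in> X" "\<sigma> (x, sfun X \<sigma> x) = (x, sfun X \<sigma> x)"
proof -
  have "\<exists>s. {p \<in> X \<times> X. \<sigma> p = p} = {(x, s x) | x. x \<in> X}"
    using assms(1) unfolding biquandle_def by (elim conjE exE) (rule exI)
  then obtain s where "{p \<in> X \<times> X. \<sigma> p = p} = {(x, s x) | x. x \<in> X}" ..
  then have fixed_iff: "y \<in> X \<and> \<sigma> (x, y) = (x, y) \<longleftrightarrow> y = s x" for y
    using assms(2) by blast
  then have "sfun X \<sigma> x = s x" unfolding sfun_def by simp
  with fixed_iff[of "s x"] show "sfun X \<sigma> x \<in> X" "\<sigma> (x, sfun X \<sigma> x) = (x, sfun X \<sigma> x)" by simp_all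
qed

lemma s2_sfun:
  assumes "biquandle X \<sigma>" "x \<in> X"
  shows "s2 \<sigma> x (sfun X \<sigma> x) = sfun X \<sigma> x"
  using biquandle_sfun(2)[OF assms] unfolding s2_def by simp

locale cohomologous_cocycle_pair = group H
  for H :: "('b, 'c) monoid_scheme" (structure) +
  fixes X :: "'a set" and S \<beta> :: "'a \<times> 'a \<Rightarrow> 'a \<times> 'a"
    and f g f' :: "'a \<Rightarrow> 'a \<Rightarrow> 'b" and lam :: "'a \<Rightarrow> 'b"
  assumes virtual: "virtual_pair X S \<beta>"
    and cocycle: "nc_cocycle_pair H X S \<beta> f g"
    and lam_closed: "x \<in> X \<Longrightarrow> lam x \<in> carrier H"
    and f'_eq: "x \<in> X \<Longrightarrow> y \<in> X \<Longrightarrow> f' x y = lam x \<otimes> f x y \<otimes> inv (lam (s2 S x y))"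
    and lam_sfun: "x \<in> X \<Longrightarrow> lam (sfun X S x) = lam x"
    and lam_s1_S: "x \<in> X \<Longrightarrow> y \<in> X \<Longrightarrow> lam (s1 S x y) = lam y"
    and lam_s1_\<beta>: "x \<in> X \<Longrightarrow> y \<in> X \<Longrightarrow> lam (s1 \<beta> x y) = lam y"
    and lam_g_commute: "x \<in> X \<Longrightarrow> y \<in> X \<Longrightarrow> lam x \<otimes> g x y = g x y \<otimes> lam x"
begin

lemma biquandle_S: "biquandle X S"
  and biquandle_\<beta>: "biquandle X \<beta>"
  and \<beta>_involution: "x \<in> X \<Longrightarrow> y \<in> X \<Longrightarrow> \<beta> (\<beta> (x, y)) = (x, y)"
  using virtual unfolding virtual_pair_def by auto

lemmas S_closed = biquandle_closed[OF biquandle_S]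
  and \<beta>_closed = biquandle_closed[OF biquandle_\<beta>]

lemma f_closed: "x \<in> X \<Longrightarrow> y \<in> X \<Longrightarrow> f x y \<in> carrier H"
  and g_closed: "x \<in> X \<Longrightarrow> y \<in> X \<Longrightarrow> g x y \<in> carrier H"
  using cocycle unfolding nc_cocycle_pair_def by auto

lemma f'_closed: "x \<in> X \<Longrightarrow> y \<in> X \<Longrightarrow> f' x y \<in> carrier H"
  by (simp add: f'_eq f_closed lam_closed S_closed)

lemma lam_s2_\<beta>:
  assumes "x \<in> X" "y \<in> X"
  shows "lam (s2 \<beta> x y) = lam x"
proof -
  have "lam (s2 \<beta> x y) = lam (s1 \<beta> (s1 \<beta> x y) (s2 \<beta> x y))"
    using assms by (simp add: lam_s1_\<beta> \<beta>_closed)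
  also have "\<dots> = lam x" using involution_s1_s2(1)[where \<sigma> = \<beta>, OF \<beta>_involution[OF assms]] by simp
  finally show ?thesis .
qed

lemma f'_f1:
  assumes X: "x \<in> X" "y \<in> X" "z \<in> X"
  shows "f' x y \<otimes> f' (s2 S x y) z = f' x (s1 S y z) \<otimes> f' (s2 S x (s1 S y z)) (s2 S y z)"
proof -
  have f1: "f x y \<otimes> f (s2 S x y) z = f x (s1 S y z) \<otimes> f (s2 S x (s1 S y z)) (s2 S y z)"
    using cocycle X unfolding nc_cocycle_pair_def by simp
  have "f' x y \<otimes> f' (s2 S x y) z
      = lam x \<otimes> (f x y \<otimes> f (s2 S x y) z) \<otimes> inv lam (s2 S (s2 S x y) z)"
    using X by (simp add: f'_eq conj_mult_conj lam_closed f_closed S_closed)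
  also have "\<dots> = lam x \<otimes> (f x (s1 S y z) \<otimes> f (s2 S x (s1 S y z)) (s2 S y z))
      \<otimes> inv lam (s2 S (s2 S x (s1 S y z)) (s2 S y z))"
    using f1 biquandle_braid_s2[OF biquandle_S X] by simp
  also have "\<dots> = f' x (s1 S y z) \<otimes> f' (s2 S x (s1 S y z)) (s2 S y z)"
    using X by (simp add: f'_eq conj_mult_conj lam_closed f_closed S_closed)
  finally show ?thesis .
qed

lemma f'_f2:
  assumes X: "x \<in> X" "y \<in> X" "z \<in> X"
  shows "f' (s1 S x y) (s1 S (s2 S x y) z) = f' y z"
proof -
  have f2: "f (s1 S x y) (s1 S (s2 S x y) z) = f y z"
    using cocycle X unfolding nc_cocycle_pair_def by simp
  have "lam (s2 S (s1 S x y) (s1 S (s2 S x y) z))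
      = lam (s1 S (s2 S x (s1 S y z)) (s2 S y z))"
    using biquandle_braid_s1[OF biquandle_S X] by simp
  also have "\<dots> = lam (s2 S y z)" using X by (simp add: lam_s1_S S_closed)
  finally show ?thesis using X f2 by (simp add: f'_eq lam_s1_S S_closed)
qed

lemma f'_f3:
  assumes "x \<in> X"
  shows "f' x (sfun X S x) = \<one>"
proof -
  have "f x (sfun X S x) = \<one>" using cocycle assms unfolding nc_cocycle_pair_def by simp
  then show ?thesis
    using assms by (simp add: f'_eq biquandle_sfun(1)[OF biquandle_S] s2_sfun[OF biquandle_S]
        lam_sfun lam_closed)
qed

lemma f'_m3:
  assumes X: "x \<in> X" "y \<in> X" "z \<in> X"
  shows "g x (s1 \<beta> y z) \<otimes> f' (s2 \<beta> x (s1 \<beta> y z)) (s2 \<beta> y z) = f' x y \<otimes> g (s2 S x y) z"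
proof -
  define w v where "w = s1 \<beta> y z" and "v = s2 \<beta> y z"
  have wv: "w \<in> X" "v \<in> X" using X by (simp_all add: w_def v_def \<beta>_closed)
  have m3: "g x w \<otimes> f (s2 \<beta> x w) v = f x y \<otimes> g (s2 S x y) z"
    using cocycle X unfolding nc_cocycle_pair_def w_def v_def by simp
  have "s1 \<beta> w v = y" unfolding w_def v_def using involution_s1_s2(1)[where \<sigma> = \<beta>, OF \<beta>_involution[OF X(2,3)]] .
  then have "lam (s2 S (s2 \<beta> x w) v) = lam (s2 \<beta> (s2 S x y) (s2 \<beta> w v))"
    using virtual_pair_braid_s2[OF virtual X(1) wv] by simp
  also have "\<dots> = lam (s2 S x y)" using X wv by (simp add: lam_s2_\<beta> S_closed \<beta>_closed)
  finally have lam_outer: "lam (s2 S (s2 \<beta> x w) v) = lam (s2 S x y)" .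
  have in_H: "lam x \<in> carrier H" "g x w \<in> carrier H" "f (s2 \<beta> x w) v \<in> carrier H"
    "inv lam (s2 S x y) \<in> carrier H" "f x y \<in> carrier H" "g (s2 S x y) z \<in> carrier H"
    using X wv by (simp_all add: lam_closed g_closed f_closed S_closed \<beta>_closed)
  have "g x w \<otimes> f' (s2 \<beta> x w) v = g x w \<otimes> (lam x \<otimes> f (s2 \<beta> x w) v \<otimes> inv lam (s2 S x y))"
    using X wv by (simp add: f'_eq \<beta>_closed lam_s2_\<beta> lam_outer)
  also have "\<dots> = (lam x \<otimes> g x w) \<otimes> f (s2 \<beta> x w) v \<otimes> inv lam (s2 S x y)"
    using X wv in_H by (simp add: lam_g_commute m_assoc)
  also have "\<dots> = lam x \<otimes> f x y \<otimes> (g (s2 S x y) z \<otimes> inv lam (s2 S x y))"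
    using in_H m3 by (simp add: m_assoc)
  also have "\<dots> = lam x \<otimes> f x y \<otimes> inv lam (s2 S x y) \<otimes> g (s2 S x y) z"
    using X in_H by (simp add: inv_commute lam_g_commute lam_closed S_closed m_assoc)
  also have "\<dots> = f' x y \<otimes> g (s2 S x y) z" using X by (simp add: f'_eq)
  finally show ?thesis unfolding w_def v_def .
qed

lemma nc_cocycle_pair_f': "nc_cocycle_pair H X S \<beta> f' g"
  using cocycle unfolding nc_cocycle_pair_def
  by (elim conjE, intro conjI;
      (assumption | simp (no_asm) add: f'_closed g_closed f'_f1 f'_f2 f'_f3 f'_m3))

end

lemma cohomologous_cocycle_pairE:
  assumes "virtual_pair X S \<beta>" "group H" "nc_cocycle_pair H X S \<beta> f g"
    and "cohomologous H X S \<beta> f g f' g"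
  obtains lam where "cohomologous_cocycle_pair H X S \<beta> f g f' lam"
proof -
  obtain lam where closed: "\<forall>x\<in>X. lam x \<in> carrier H"
    and twist: "\<forall>x\<in>X. \<forall>y\<in>X. f' x y = lam x \<otimes>\<^bsub>H\<^esub> f x y \<otimes>\<^bsub>H\<^esub> inv\<^bsub>H\<^esub> (lam (s2 S x y))"
    and sfun_inv: "\<forall>x\<in>X. lam x = lam (sfun X S x)"
    and S_inv: "\<forall>x\<in>X. \<forall>y\<in>X. lam y = lam (s1 S x y)"
    and \<beta>_inv: "\<forall>x\<in>X. \<forall>y\<in>X. lam y = lam (s1 \<beta> x y)"
    and commute: "\<forall>x\<in>X. \<forall>y\<in>X. lam x \<otimes>\<^bsub>H\<^esub> g x y = g x y \<otimes>\<^bsub>H\<^esub> lam x"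
    using assms(4) unfolding cohomologous_def by (elim conjE exE) (rule that)
  have "cohomologous_cocycle_pair H X S \<beta> f g f' lam"
  proof (intro cohomologous_cocycle_pair.intro cohomologous_cocycle_pair_axioms.intro)
    show "lam (sfun X S x) = lam x" if "x \<in> X" for x using sfun_inv that by metis
    show "lam (s1 S x y) = lam y" if "x \<in> X" "y \<in> X" for x y using S_inv that by metis
    show "lam (s1 \<beta> x y) = lam y" if "x \<in> X" "y \<in> X" for x y using \<beta>_inv that by metis
  qed (use assms closed twist commute in simp_all)
  then show ?thesis by (rule that)
qed

theorem mainTheorem6:
  fixes H :: "('b, 'c) monoid_scheme" and X :: "'a set"
    and S \<beta> :: "'a \<times> 'a \<Rightarrow> 'a \<times> 'a"
    and f g f' :: "'a \<Rightarrow> 'a \<Rightarrow> 'b"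
  assumes "virtual_pair X S \<beta>"
    and "group H"
    and "nc_cocycle_pair H X S \<beta> f g"
    and "cohomologous H X S \<beta> f g f' g"
  shows "nc_cocycle_pair H X S \<beta> f' g"
proof -
  obtain lam where "cohomologous_cocycle_pair H X S \<beta> f g f' lam"
    using cohomologous_cocycle_pairE[OF assms] .
  then show ?thesis by (rule cohomologous_cocycle_pair.nc_cocycle_pair_f')
qed

end
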